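(* Let $(b,0)$ be a tree over $X$. Then $X$ is totally bounded with respect to every metric on $X$ which is intrinsic with respect to some measure $m$ on $X$ with $m(X)<\infty$ if and only if every function of finite energy is bounded, i.e. $\widetilde D\subseteq\ell^\infty(X)$.
   Context: A weighted graph $(b,c)$ over a countably infinite set $X$ consists of a symmetric $b:X\times X\to[0,\infty)$ with $b(x,x)=0$ and $\sum_y b(x,y)<\infty$ for all $x$, and $c:X\to[0,\infty)$; here $c\equiv0$. A path is a finite sequence $(x_0,\dots,x_n)$ of pairwise distinct vertices with $b(x_{i-1},x_i)>0$. The graph is a tree if it is connected (any two distinct vertices are joined by a path) and there is no path $(x_0,\dots,x_n)$ with $n\ge2$ and $b(x_n,x_0)>0$. $\widetilde Q(f)=\frac12\sum_{x,y}b(x,y)|f(x)-f(y)|^2$ and $\widetilde D=\{f:X\to\mathbb C:\widetilde Q(f)<\infty\}$. A measure on $X$ is $m:X\to[0,\infty)$ with $m(A)=\sum_{x\in A}m(x)$; a metric $\sigma$ on $X$ is intrinsic with respect to $m$ if $\frac12\sum_y b(x,y)\sigma(x,y)^2\le m(x)$ for all $x$. *)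

theory Defs
  imports "HOL-Analysis.Analysis"
begin

text \<open>A weighted graph (b,0) over the vertex type 'a (c = 0).\<close>
definition weighted_graph :: "('a \<Rightarrow> 'a \<Rightarrow> real) \<Rightarrow> bool" where
  "weighted_graph b \<longleftrightarrow>
     (\<forall>x y. 0 \<le> b x y) \<and> (\<forall>x y. b x y = b y x) \<and> (\<forall>x. b x x = 0) \<and>
     (\<forall>x. (b x) summable_on UNIV)"

definition is_path :: "('a \<Rightarrow> 'a \<Rightarrow> real) \<Rightarrow> 'a list \<Rightarrow> bool" where
  "is_path b p \<longleftrightarrow> p \<noteq> [] \<and> distinct p \<and>
     (\<forall>i. Suc i < length p \<longrightarrow> 0 < b (p ! i) (p ! Suc i))"

definition is_tree :: "('a \<Rightarrow> 'a \<Rightarrow> real) \<Rightarrow> bool" where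
  "is_tree b \<longleftrightarrow>
     (\<forall>x y. x \<noteq> y \<longrightarrow> (\<exists>p. is_path b p \<and> hd p = x \<and> last p = y)) \<and>
     \<not> (\<exists>p. is_path b p \<and> 3 \<le> length p \<and> 0 < b (last p) (hd p))"

definition intrinsic :: "('a \<Rightarrow> 'a \<Rightarrow> real) \<Rightarrow> ('a \<Rightarrow> real) \<Rightarrow> ('a \<Rightarrow> 'a \<Rightarrow> real) \<Rightarrow> bool" where
  "intrinsic b m \<sigma> \<longleftrightarrow>
     (\<forall>x. (\<lambda>y. b x y * (\<sigma> x y)\<^sup>2) summable_on UNIV \<and>
          (1/2) * (\<Sum>\<^sub>\<infinity>y. b x y * (\<sigma> x y)\<^sup>2) \<le> m x)"

definition finite_energy :: "('a \<Rightarrow> 'a \<Rightarrow> real) \<Rightarrow> ('a \<Rightarrow> complex) \<Rightarrow> bool" where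
  "finite_energy b f \<longleftrightarrow>
     (\<lambda>(x, y). b x y * (cmod (f x - f y))\<^sup>2) summable_on UNIV"

end

theory Submission
  imports Defs
begin

text \<open>
  (\<Longrightarrow>) For \<open>f\<close> of finite energy choose weights \<open>w > 0\<close> with \<open>\<Sum>\<^sub>x w(x)^2 deg(x) < \<infinity>\<close>.
  Then \<open>d(x,y) = |f(x) - f(y)| + w(x) + w(y)\<close> (for \<open>x \<noteq> y\<close>) is a metric with
  \<open>\<Sum>\<^sub>x\<^sub>,\<^sub>y b(x,y) d(x,y)^2 < \<infinity>\<close>, hence intrinsic for the finite measure
  \<open>m(x) = 1/2 \<Sum>\<^sub>y b(x,y) d(x,y)^2\<close>. Finitely many \<open>d\<close>-balls of radius 1 cover \<open>X\<close>, and \<open>f\<close>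
  varies by less than 1 on each of them.

  (\<Longleftarrow>) Let \<open>\<sigma>\<close> be intrinsic for a finite \<open>m\<close> but not totally bounded: for some \<open>\<epsilon> > 0\<close>
  every finite set has an \<open>\<epsilon>\<close>-far point. Choose \<open>N : X \<rightarrow> \<nat>\<close> with finite sublevel sets and
  \<open>\<Sum>\<^sub>x 4^N(x) m(x) < \<infinity>\<close>, and put \<open>c(x,y) = \<sigma>(x,y) sqrt(4^N(x) + 4^N(y))\<close>. Then
  \<open>\<Sum>\<^sub>x\<^sub>,\<^sub>y b(x,y) c(x,y)^2 \<le> 4 \<Sum>\<^sub>x 4^N(x) m(x) < \<infinity>\<close>, so the \<open>c\<close>-length distance from a
  fixed root along paths has finite energy and is therefore bounded. Yet a path from the root to a
  point \<open>\<epsilon>\<close>-far from the root and from \<open>{N \<le> K}\<close> covers \<open>\<sigma>\<close>-length \<open>\<epsilon>\<close> outside \<open>{N \<le> K}\<close>,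
  where \<open>c \<ge> 2^K \<sigma>\<close>; so that distance is unbounded.
\<close>

lemma summable_on_plus_swap:
  fixes g :: "'a \<Rightarrow> 'a \<Rightarrow> real"
  assumes "(\<lambda>(x, y). g x y) summable_on UNIV"
  shows "(\<lambda>(x, y). g x y + g y x) summable_on UNIV"
proof -
  have "(\<lambda>(x, y). g y x) summable_on UNIV"
    using assms summable_on_swap[of "\<lambda>(x, y). g x y" UNIV UNIV] by simp
  with assms have "(\<lambda>z. (\<lambda>(x, y). g x y) z + (\<lambda>(x, y). g y x) z) summable_on UNIV"
    by (rule summable_on_add)
  then show ?thesis by (simp only: case_prod_unfold)
qed

lemma summable_on_half_pow_to_nat: "(\<lambda>x::'a::countable. (1/2 :: real) ^ to_nat x) summable_on UNIV"
proof -
  have "(\<lambda>n::nat. (1/2 :: real) ^ n) summable_on range (to_nat :: 'a \<Rightarrow> nat)"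
    by (rule summable_on_subset_banach[of _ UNIV])
      (auto simp: summable_on_UNIV_nonneg_real_iff intro: summable_geometric)
  then show ?thesis
    by (subst (asm) summable_on_reindex) (auto simp: o_def)
qed

lemma ex_pos_summable_on_times:
  fixes h :: "'a::countable \<Rightarrow> real"
  assumes "\<And>x. 0 \<le> h x"
  obtains v where "\<And>x. 0 < v x" and "(\<lambda>x. v x * h x) summable_on UNIV"
proof
  let ?v = "\<lambda>x. (1/2 :: real) ^ to_nat x / (1 + h x)"
  show "0 < ?v x" for x
    using assms[of x] by simp
  show "(\<lambda>x. ?v x * h x) summable_on UNIV"
  proof (rule summable_on_comparison_test[OF summable_on_half_pow_to_nat])
    fix x :: 'a
    have "h x / (1 + h x) \<le> 1"
      using assms[of x] by simp
    then show "?v x * h x \<le> (1/2) ^ to_nat x"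
      using mult_left_mono[of "h x / (1 + h x)" 1 "(1/2 :: real) ^ to_nat x"] by simp
    show "0 \<le> ?v x * h x"
      using assms[of x] by simp
  qed
qed

lemma ex_finite_small_tail:
  fixes m :: "'a \<Rightarrow> real"
  assumes "m summable_on UNIV" and "\<And>x. 0 \<le> m x" and "0 < e"
  obtains G where "finite G" and "\<And>S. finite S \<Longrightarrow> S \<inter> G = {} \<Longrightarrow> sum m S \<le> e"
proof -
  obtain G where G: "finite G" "dist (sum m G) (infsum m UNIV) \<le> e"
    using has_sum_finite_approximation[OF has_sum_infsum[OF assms(1)] assms(3)] by auto
  have "sum m S \<le> e" if "finite S" "S \<inter> G = {}" for S
  proof -
    have "sum m G + sum m S = sum m (G \<union> S)"
      using that G(1) by (simp add: sum.union_disjoint Int_commute)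
    also have "\<dots> \<le> infsum m UNIV"
      using that G(1) assms by (intro finite_sum_le_infsum) auto
    finally show ?thesis
      using G(2) by (auto simp: dist_real_def)
  qed
  with G(1) that show ?thesis by blast
qed

lemma ex_proper_function_small_tails:
  fixes m :: "'a::countable \<Rightarrow> real"
  assumes "m summable_on UNIV" and "\<And>x. 0 \<le> m x" and "\<And>k. 0 < e k"
  obtains N :: "'a \<Rightarrow> nat" where "\<And>k. finite {x. N x \<le> k}"
    and "\<And>k S. finite S \<Longrightarrow> (\<And>x. x \<in> S \<Longrightarrow> k < N x) \<Longrightarrow> sum m S \<le> e k"
proof -
  have "\<exists>G. finite G \<and> (\<forall>S. finite S \<longrightarrow> S \<inter> G = {} \<longrightarrow> sum m S \<le> e k)" for k
  proof -
    obtain G where "finite G" and "\<And>S. finite S \<Longrightarrow> S \<inter> G = {} \<Longrightarrow> sum m S \<le> e k"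
      by (rule ex_finite_small_tail[OF assms(1,2) assms(3)[of k]]) iprover
    then show ?thesis
      by (intro exI[of _ G]) simp
  qed
  then have "\<exists>G. \<forall>k. finite (G k) \<and> (\<forall>S. finite S \<longrightarrow> S \<inter> G k = {} \<longrightarrow> sum m S \<le> e k)"
    by (intro choice allI)
  then obtain G where G: "\<forall>k. finite (G k) \<and> (\<forall>S. finite S \<longrightarrow> S \<inter> G k = {} \<longrightarrow> sum m S \<le> e k)" ..
  then have G_fin: "\<And>k. finite (G k)"
    and G_tail: "\<And>k S. finite S \<Longrightarrow> S \<inter> G k = {} \<Longrightarrow> sum m S \<le> e k"
    by simp_all
  \<comment> \<open>\<open>from_nat k\<close> is added so that every \<open>x\<close> lies in some \<open>G' k\<close>, namely \<open>G' (to_nat x)\<close>.\<close>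
  define G' where "G' k = insert (from_nat k) (G k)" for k
  define N where "N x = (LEAST k. x \<in> G' k)" for x
  have N_le: "N x \<le> k" if "x \<in> G' k" for x k
    unfolding N_def using that by (rule Least_le)
  have N_in: "x \<in> G' (N x)" for x
    unfolding N_def by (rule LeastI[of _ "to_nat x"]) (simp add: G'_def)
  show ?thesis
  proof (rule that)
    show "finite {x. N x \<le> k}" for k
      by (rule finite_subset[of _ "\<Union>j\<le>k. G' j"]) (use N_in G_fin in \<open>auto simp: G'_def\<close>)
    show "sum m S \<le> e k" if "finite S" and S: "\<And>x. x \<in> S \<Longrightarrow> k < N x" for k S
    proof (rule G_tail[OF that(1)])
      have "x \<notin> G k" if "k < N x" for x
        using N_le[of x k] that by (auto simp: G'_def)
      then show "S \<inter> G k = {}"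
        using S by blast
    qed
  qed
qed

lemma ex_proper_weight_summable:
  fixes m :: "'a::countable \<Rightarrow> real"
  assumes "m summable_on UNIV" and "\<And>x. 0 \<le> m x"
  obtains N :: "'a \<Rightarrow> nat"
  where "\<And>k. finite {x. N x \<le> k}" and "(\<lambda>x. 4 ^ N x * m x) summable_on UNIV"
proof -
  obtain N :: "'a \<Rightarrow> nat" where level_fin: "\<And>k. finite {x. N x \<le> k}"
    and tail: "\<And>k S. finite S \<Longrightarrow> (\<And>x. x \<in> S \<Longrightarrow> k < N x) \<Longrightarrow> sum m S \<le> (1/8) ^ Suc k"
    using ex_proper_function_small_tails[OF assms, of "\<lambda>k. (1/8) ^ Suc k"] by auto
  define L where "L k = {x. N x = k}" for k
  let ?f = "\<lambda>x. 4 ^ N x * m x"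
  have L_fin: "finite (L k)" for k
    using level_fin[of k] by (rule rev_finite_subset) (auto simp: L_def)
  have L_sum: "sum ?f (L k) = 4 ^ k * sum m (L k)" for k
    by (simp add: L_def sum_distrib_left)
  have "sum ?f (L (Suc k)) \<le> (1/2) ^ k" for k
  proof -
    have "sum ?f (L (Suc k)) \<le> 4 ^ Suc k * (1/8) ^ Suc k"
      unfolding L_sum using L_fin by (intro mult_left_mono tail) (auto simp: L_def)
    also have "\<dots> = (1/2) ^ Suc k"
      by (simp flip: power_mult_distrib)
    also have "\<dots> \<le> (1/2) ^ k"
      by simp
    finally show ?thesis .
  qed
  then have "summable (\<lambda>k. sum ?f (L (Suc k)))"
    using assms(2) by (intro summable_comparison_test[OF _ summable_geometric[of "1/2 :: real"]])
      (auto simp: sum_nonneg)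
  then have "summable (\<lambda>k. sum ?f (L k))"
    by (rule summable_Suc_iff[THEN iffD1])
  then have level_sums: "(\<lambda>k. sum ?f (L k)) summable_on UNIV"
    using assms(2) by (simp add: summable_on_UNIV_nonneg_real_iff sum_nonneg)
  have "?f summable_on (\<Union>k. L k)"
  proof (rule summable_on_UnionI[OF _ level_sums])
    show "(?f has_sum sum ?f (L k)) (L k)" for k
      using L_fin by simp
    show "disjoint_family_on L UNIV"
      by (auto simp: disjoint_family_on_def L_def)
  qed (use assms(2) in auto)
  moreover have "(\<Union>k. L k) = UNIV"
    by (auto simp: L_def)
  ultimately show ?thesis
    using that level_fin by metis
qed

lemma power2_sum_le: "(a + b)\<^sup>2 \<le> 2 * (a\<^sup>2 + b\<^sup>2 :: real)"
proof -
  have "0 \<le> (a - b)\<^sup>2"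
    by simp
  then show ?thesis
    by (simp add: power2_sum power2_diff)
qed

lemma intrinsic_of_summable_energy:
  fixes b \<sigma> :: "'a \<Rightarrow> 'a \<Rightarrow> real"
  assumes "(\<lambda>(x, y). b x y * (\<sigma> x y)\<^sup>2) summable_on UNIV"
  defines "m \<equiv> \<lambda>x. (1/2) * (\<Sum>\<^sub>\<infinity>y. b x y * (\<sigma> x y)\<^sup>2)"
  shows "intrinsic b m \<sigma>" and "m summable_on UNIV"
proof -
  have "(\<lambda>(x, y). b x y * (\<sigma> x y)\<^sup>2) summable_on Sigma UNIV (\<lambda>_. UNIV)"
    using assms(1) by simp
  then have rows: "(\<lambda>y. b x y * (\<sigma> x y)\<^sup>2) summable_on UNIV" for x
    by (rule summable_on_SigmaD1) simp
  show "intrinsic b m \<sigma>"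
    using rows by (simp add: intrinsic_def m_def)
  have "(\<lambda>x. \<Sum>\<^sub>\<infinity>y. b x y * (\<sigma> x y)\<^sup>2) summable_on UNIV"
    using summable_on_SigmaD[of "\<lambda>(x, y). b x y * (\<sigma> x y)\<^sup>2" UNIV "\<lambda>_. UNIV"] assms(1) rows
    by simp
  then show "m summable_on UNIV"
    unfolding m_def by (rule summable_on_cmult_right)
qed

lemma summable_weighted_intrinsic_energy:
  fixes b \<sigma> :: "'a \<Rightarrow> 'a \<Rightarrow> real"
  assumes "weighted_graph b" and "\<And>x y. \<sigma> x y = \<sigma> y x" and "intrinsic b m \<sigma>"
    and "\<And>x. 0 \<le> w x" and "(\<lambda>x. w x * m x) summable_on UNIV"
  shows "(\<lambda>(x, y). b x y * (\<sigma> x y)\<^sup>2 * (w x + w y)) summable_on UNIV"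
proof -
  have b_nonneg: "\<And>x y. 0 \<le> b x y" and b_sym: "\<And>x y. b x y = b y x"
    using assms(1) by (auto simp: weighted_graph_def)
  define e where "e x = (\<Sum>\<^sub>\<infinity>y. b x y * (\<sigma> x y)\<^sup>2)" for x
  have rows: "(\<lambda>y. b x y * (\<sigma> x y)\<^sup>2) summable_on UNIV" and e_le: "e x \<le> 2 * m x" for x
    using assms(3) by (auto simp: intrinsic_def e_def mult.commute)
  have "(\<lambda>x. w x * e x) summable_on UNIV"
  proof (rule summable_on_comparison_test)
    show "(\<lambda>x. 2 * (w x * m x)) summable_on UNIV"
      using assms(5) by (rule summable_on_cmult_right)
    show "w x * e x \<le> 2 * (w x * m x)" for x
      using mult_left_mono[OF e_le[of x] assms(4)[of x]] by simp
    show "0 \<le> w x * e x" for x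
      using assms(4) b_nonneg by (simp add: e_def infsum_nonneg)
  qed
  then have "(\<lambda>(x, y). w x * (b x y * (\<sigma> x y)\<^sup>2)) summable_on Sigma UNIV (\<lambda>_. UNIV)"
    using has_sum_cmult_right[OF has_sum_infsum[OF rows]] assms(4) b_nonneg
    by (intro summable_on_SigmaI) (auto simp: e_def)
  then have "(\<lambda>(x, y). w x * (b x y * (\<sigma> x y)\<^sup>2) + w y * (b y x * (\<sigma> y x)\<^sup>2)) summable_on UNIV"
    by (intro summable_on_plus_swap) simp
  moreover have "w x * (b x y * (\<sigma> x y)\<^sup>2) + w y * (b y x * (\<sigma> y x)\<^sup>2)
      = b x y * (\<sigma> x y)\<^sup>2 * (w x + w y)" for x y
    by (simp add: b_sym[of y x] assms(2)[of y x] algebra_simps)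
  ultimately show ?thesis
    by simp
qed

lemma Metric_space_norm_diff_plus_weights:
  fixes f :: "'a \<Rightarrow> 'b::real_normed_vector"
  assumes "\<And>x. 0 < w x"
  shows "Metric_space UNIV (\<lambda>x y. norm (f x - f y) + (if x = y then 0 else w x + w y))"
proof
  fix x y z
  show "0 \<le> norm (f x - f y) + (if x = y then 0 else w x + w y)"
    using assms[of x] assms[of y] by simp
  show "norm (f x - f y) + (if x = y then 0 else w x + w y)
      = norm (f y - f x) + (if y = x then 0 else w y + w x)"
    by (simp add: norm_minus_commute add.commute)
  show "(norm (f x - f y) + (if x = y then 0 else w x + w y) = 0) = (x = y)"
    using assms[of x] assms[of y] by (auto simp: add_nonneg_eq_0_iff)
  have "norm (f x - f z) \<le> norm (f x - f y) + norm (f y - f z)"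
    using norm_triangle_ineq[of "f x - f y" "f y - f z"] by simp
  moreover have "(if x = z then 0 else w x + w z)
      \<le> (if x = y then 0 else w x + w y) + (if y = z then 0 else w y + w z)"
    using assms[of x] assms[of y] assms[of z] by auto
  ultimately show "norm (f x - f z) + (if x = z then 0 else w x + w z)
      \<le> norm (f x - f y) + (if x = y then 0 else w x + w y)
       + (norm (f y - f z) + (if y = z then 0 else w y + w z))"
    by simp
qed

lemma (in Metric_space) bounded_if_mtotally_bounded_Lipschitz:
  fixes f :: "'a \<Rightarrow> 'b::real_normed_vector"
  assumes "mtotally_bounded M" and "\<And>x y. x \<in> M \<Longrightarrow> y \<in> M \<Longrightarrow> norm (f x - f y) \<le> d x y"
  shows "\<exists>C. \<forall>x\<in>M. norm (f x) \<le> C"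
proof -
  obtain K where K: "finite K" "K \<subseteq> M" "M \<subseteq> (\<Union>k\<in>K. mball k 1)"
    using assms(1) unfolding mtotally_bounded_def by (meson zero_less_one)
  have "norm (f x) \<le> (\<Sum>k\<in>K. norm (f k)) + 1" if "x \<in> M" for x
  proof -
    obtain k where k: "k \<in> K" "d k x < 1"
      using K(3) \<open>x \<in> M\<close> by auto
    have "norm (f x) \<le> norm (f k) + norm (f k - f x)"
      by (metis norm_minus_commute norm_triangle_sub add.commute)
    moreover have "norm (f k - f x) \<le> 1"
      using assms(2)[of k x] k K(2) that by auto
    moreover have "norm (f k) \<le> (\<Sum>k\<in>K. norm (f k))"
      using k K(1) by (intro member_le_sum) auto
    ultimately show ?thesis
      by simp
  qed
  then show ?thesis
    by blast
qed

lemma (in Metric_space) mdist_le_sum_steps: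
  assumes "j \<le> n" and "\<And>i. i \<le> n \<Longrightarrow> q i \<in> M"
  shows "d (q j) (q n) \<le> (\<Sum>i=j..<n. d (q i) (q (Suc i)))"
  using assms
proof (induction n rule: dec_induct)
  case base
  then show ?case
    by simp
next
  case (step n)
  have "d (q j) (q (Suc n)) \<le> d (q j) (q n) + d (q n) (q (Suc n))"
    using step by (intro triangle) auto
  also have "\<dots> \<le> (\<Sum>i=j..<Suc n. d (q i) (q (Suc i)))"
    using step by simp
  finally show ?case .
qed

definition path_length :: "('a \<Rightarrow> 'a \<Rightarrow> real) \<Rightarrow> 'a list \<Rightarrow> real" where
  "path_length c p = (\<Sum>i<length p - 1. c (p ! i) (p ! Suc i))"

lemma path_length_nonneg: "(\<And>u v. 0 \<le> c u v) \<Longrightarrow> 0 \<le> path_length c p"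
  unfolding path_length_def by (simp add: sum_nonneg)

lemma (in Metric_space) path_length_ge_escape:
  assumes "p \<noteq> []" and "set p \<subseteq> M" and "hd p \<in> T" and "\<forall>t\<in>T. \<epsilon> \<le> d t (last p)"
    and "\<And>u v. v \<notin> T \<Longrightarrow> a * d u v \<le> c u v" and "\<And>u v. 0 \<le> c u v" and "0 \<le> a"
  shows "a * \<epsilon> \<le> path_length c p"
proof -
  define n where "n = length p - 1"
  have last_p: "last p = p ! n" and hd_p: "hd p = p ! 0"
    using assms(1) by (simp_all add: n_def last_conv_nth hd_conv_nth)
  define J where "J = {i. i \<le> n \<and> p ! i \<in> T}"
  define j where "j = Max J"
  have "finite J" and "0 \<in> J"
    using assms(3) by (simp_all add: J_def hd_p)
  then have "j \<in> J" and after_j: "\<And>i. i \<in> J \<Longrightarrow> i \<le> j"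
    unfolding j_def by (auto intro: Max_in)
  then have "j \<le> n" and "p ! j \<in> T"
    by (simp_all add: J_def)
  have outside: "p ! Suc i \<notin> T" if "j \<le> i" "i < n" for i
    using after_j[of "Suc i"] that by (auto simp: J_def)
  have "p ! i \<in> M" if "i \<le> n" for i
    using that assms(1,2) nth_mem[of i p] by (cases p) (auto simp: n_def)
  \<comment> \<open>after its last visit \<open>j\<close> to \<open>T\<close> the path covers distance at least \<open>\<epsilon>\<close> outside \<open>T\<close>\<close>
  then have "\<epsilon> \<le> (\<Sum>i=j..<n. d (p ! i) (p ! Suc i))"
    using assms(4) \<open>p ! j \<in> T\<close> mdist_le_sum_steps[OF \<open>j \<le> n\<close>, of "(!) p"] last_p
    by fastforce
  then have "a * \<epsilon> \<le> (\<Sum>i=j..<n. a * d (p ! i) (p ! Suc i))"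
    using assms(7) by (simp add: mult_left_mono flip: sum_distrib_left)
  also have "\<dots> \<le> (\<Sum>i=j..<n. c (p ! i) (p ! Suc i))"
    using assms(5) outside by (intro sum_mono) auto
  also have "\<dots> \<le> path_length c p"
    unfolding path_length_def n_def[symmetric] using assms(6) by (intro sum_mono2) auto
  finally show ?thesis .
qed

lemma path_length_take_le:
  assumes "\<And>u v. 0 \<le> c u v"
  shows "path_length c (take k p) \<le> path_length c p"
proof -
  have "path_length c (take k p) = (\<Sum>i<min k (length p) - 1. c (p ! i) (p ! Suc i))"
    unfolding path_length_def by (intro sum.cong) auto
  also have "\<dots> \<le> path_length c p"
    unfolding path_length_def using assms by (intro sum_mono2) auto
  finally show ?thesis .
qed

lemma path_length_snoc:
  assumes "p \<noteq> []"
  shows "path_length c (p @ [y]) = path_length c p + c (last p) y"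
proof -
  obtain n where n: "length p = Suc n"
    using assms by (cases p) auto
  have "path_length c (p @ [y]) = (\<Sum>i<n. c (p ! i) (p ! Suc i)) + c (p ! n) y"
    unfolding path_length_def using n by (simp add: nth_append)
  then show ?thesis
    using n assms by (simp add: path_length_def last_conv_nth)
qed

lemma ex_path_extend_edge:
  assumes p: "is_path b p" and edge: "0 < b (last p) y" and c_nonneg: "\<And>u v. 0 \<le> c u v"
  obtains q where "is_path b q" and "hd q = hd p" and "last q = y"
    and "path_length c q \<le> path_length c p + c (last p) y"
proof (cases "y \<in> set p")
  case True
  then obtain j where j: "j < length p" "p ! j = y"
    by (auto simp: in_set_conv_nth)
  let ?q = "take (Suc j) p"
  have "is_path b ?q" and "hd ?q = hd p" and "last ?q = y"
    using p j by (auto simp: is_path_def hd_take last_conv_nth)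
  moreover have "path_length c ?q \<le> path_length c p + c (last p) y"
    using path_length_take_le[of c, OF c_nonneg] c_nonneg[of "last p" y]
    by (meson add_increasing2)
  ultimately show ?thesis
    using that by blast
next
  case False
  have "p \<noteq> []"
    using p by (simp add: is_path_def)
  have "0 < b (p ! i) y" if "Suc i = length p" for i
  proof -
    have "last p = p ! i"
      using that \<open>p \<noteq> []\<close> by (metis diff_Suc_1 last_conv_nth)
    then show ?thesis
      using edge by simp
  qed
  then have "is_path b (p @ [y])"
    using p False by (auto simp: is_path_def nth_append less_Suc_eq)
  then show ?thesis
    using that \<open>p \<noteq> []\<close> by (simp add: path_length_snoc)
qed

definition path_dist :: "('a \<Rightarrow> 'a \<Rightarrow> real) \<Rightarrow> ('a \<Rightarrow> 'a \<Rightarrow> real) \<Rightarrow> 'a \<Rightarrow> 'a \<Rightarrow> real" where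
  "path_dist b c r x = (INF p \<in> {p. is_path b p \<and> hd p = r \<and> last p = x}. path_length c p)"

lemma path_dist_le_path_length:
  assumes "\<And>u v. 0 \<le> c u v" and "is_path b p" and "hd p = r" and "last p = x"
  shows "path_dist b c r x \<le> path_length c p"
  unfolding path_dist_def using assms path_length_nonneg[of c]
  by (intro cINF_lower bdd_belowI2[where m = 0]) auto

lemma le_path_dist:
  assumes "\<exists>p. is_path b p \<and> hd p = r \<and> last p = x"
    and "\<And>p. is_path b p \<Longrightarrow> hd p = r \<Longrightarrow> last p = x \<Longrightarrow> a \<le> path_length c p"
  shows "a \<le> path_dist b c r x"
  unfolding path_dist_def using assms by (intro cINF_greatest) auto

lemma path_dist_edge_le:
  assumes "\<And>u v. 0 \<le> c u v" and "\<exists>p. is_path b p \<and> hd p = r \<and> last p = x" and "0 < b x y"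
  shows "path_dist b c r y \<le> path_dist b c r x + c x y"
proof -
  have "path_dist b c r y - c x y \<le> path_dist b c r x"
  proof (rule le_path_dist[OF assms(2)])
    fix p assume p: "is_path b p" "hd p = r" "last p = x"
    obtain q where "is_path b q" "hd q = r" "last q = y"
      and "path_length c q \<le> path_length c p + c x y"
      using ex_path_extend_edge[of b p y c] p assms(1,3) by metis
    then show "path_dist b c r y - c x y \<le> path_length c p"
      using path_dist_le_path_length[of c, OF assms(1)] by fastforce
  qed
  then show ?thesis
    by simp
qed

lemma finite_energy_path_dist:
  fixes b c :: "'a \<Rightarrow> 'a \<Rightarrow> real"
  assumes "weighted_graph b" and "\<And>u v. 0 \<le> c u v" and "\<And>u v. c u v = c v u"
    and "\<And>x. \<exists>p. is_path b p \<and> hd p = r \<and> last p = x"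
    and "(\<lambda>(x, y). b x y * (c x y)\<^sup>2) summable_on UNIV"
  shows "finite_energy b (\<lambda>x. complex_of_real (path_dist b c r x))"
proof -
  have b_nonneg: "\<And>x y. 0 \<le> b x y" and b_sym: "\<And>x y. b x y = b y x"
    using assms(1) by (auto simp: weighted_graph_def)
  have "b x y * (cmod (complex_of_real (path_dist b c r x) - path_dist b c r y))\<^sup>2 \<le> b x y * (c x y)\<^sup>2"
    for x y
  proof (cases "0 < b x y")
    case True
    then have "\<bar>path_dist b c r x - path_dist b c r y\<bar> \<le> c x y"
      using path_dist_edge_le[of c, OF assms(2,4), of x y] path_dist_edge_le[of c, OF assms(2,4), of y x]
        b_sym[of x y] assms(3)[of x y] by auto
    then have "\<bar>path_dist b c r x - path_dist b c r y\<bar>\<^sup>2 \<le> (c x y)\<^sup>2"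
      by (rule power_mono) simp
    then have "(cmod (complex_of_real (path_dist b c r x) - path_dist b c r y))\<^sup>2 \<le> (c x y)\<^sup>2"
      by (simp flip: of_real_diff)
    then show ?thesis
      using b_nonneg by (rule mult_left_mono)
  next
    case False
    then show ?thesis
      using b_nonneg[of x y] by simp
  qed
  then show ?thesis
    unfolding finite_energy_def using b_nonneg
    by (intro summable_on_comparison_test[OF assms(5)]) auto
qed

lemma is_tree_ex_path:
  assumes "is_tree b"
  shows "\<exists>p. is_path b p \<and> hd p = x \<and> last p = y"
proof (cases "x = y")
  case True
  then show ?thesis
    by (intro exI[of _ "[x]"]) (simp add: is_path_def)
next
  case False
  then show ?thesis
    using assms by (simp add: is_tree_def)
qed

lemma (in Metric_space) ex_far_point_if_not_mtotally_bounded: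
  assumes "\<not> mtotally_bounded M"
  obtains \<epsilon> where "0 < \<epsilon>" and "\<And>K. finite K \<Longrightarrow> K \<subseteq> M \<Longrightarrow> \<exists>x\<in>M. \<forall>t\<in>K. \<epsilon> \<le> d t x"
proof -
  obtain \<epsilon> where "0 < \<epsilon>" and not_covered: "\<And>K. finite K \<Longrightarrow> K \<subseteq> M \<Longrightarrow> \<not> M \<subseteq> (\<Union>x\<in>K. mball x \<epsilon>)"
    using assms unfolding mtotally_bounded_def by meson
  have "\<exists>x\<in>M. \<forall>t\<in>K. \<epsilon> \<le> d t x" if K: "finite K" "K \<subseteq> M" for K
  proof -
    obtain x where "x \<in> M" and "\<forall>t\<in>K. x \<notin> mball t \<epsilon>"
      using not_covered[OF K] by blast
    then show ?thesis
      using K(2) by (auto simp: not_less)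
  qed
  with \<open>0 < \<epsilon>\<close> show ?thesis
    using that by blast
qed

lemma path_dist_unbounded:
  assumes "Metric_space UNIV \<sigma>" and "\<not> Metric_space.mtotally_bounded UNIV \<sigma> UNIV"
    and connected: "\<And>x. \<exists>p. is_path b p \<and> hd p = r \<and> last p = x"
    and c_nonneg: "\<And>u v. 0 \<le> c u v"
    and c_grows: "\<And>a. \<exists>T. finite T \<and> (\<forall>u v. v \<notin> T \<longrightarrow> a * \<sigma> u v \<le> c u v)"
  shows "\<exists>x. C < path_dist b c r x"
proof -
  interpret Metric_space UNIV \<sigma>
    by fact
  obtain \<epsilon> where "0 < \<epsilon>" and far: "\<And>K. finite K \<Longrightarrow> K \<subseteq> UNIV \<Longrightarrow> \<exists>x\<in>UNIV. \<forall>t\<in>K. \<epsilon> \<le> \<sigma> t x"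
    by (rule ex_far_point_if_not_mtotally_bounded[OF assms(2)]) iprover
  define a where "a = (\<bar>C\<bar> + 1) / \<epsilon>"
  obtain T where "finite T" and T: "\<And>u v. v \<notin> T \<Longrightarrow> a * \<sigma> u v \<le> c u v"
    using c_grows by blast
  then obtain x where x: "\<forall>t\<in>insert r T. \<epsilon> \<le> \<sigma> t x"
    using far[of "insert r T"] by auto
  have "0 \<le> a"
    using \<open>0 < \<epsilon>\<close> by (simp add: a_def)
  have "a * \<epsilon> \<le> path_dist b c r x"
  proof (rule le_path_dist[OF connected])
    fix p assume p: "is_path b p" "hd p = r" "last p = x"
    show "a * \<epsilon> \<le> path_length c p"
    proof (rule path_length_ge_escape[where T = "insert r T"])
      show "p \<noteq> []"
        using p(1) by (simp add: is_path_def)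
    qed (use p x T c_nonneg \<open>0 \<le> a\<close> in simp_all)
  qed
  moreover have "a * \<epsilon> = \<bar>C\<bar> + 1"
    using \<open>0 < \<epsilon>\<close> by (simp add: a_def)
  ultimately show ?thesis
    by (metis abs_ge_self less_add_one order_le_less_trans order_less_le_trans)
qed

lemma ex_pos_weight_summable_edge_energy:
  fixes b :: "'a::countable \<Rightarrow> 'a \<Rightarrow> real"
  assumes "weighted_graph b"
  obtains w where "\<And>x. 0 < w x" and "(\<lambda>(x, y). (w x)\<^sup>2 * b x y) summable_on UNIV"
proof -
  have b_nonneg: "\<And>x y. 0 \<le> b x y" and b_rows: "\<And>x. b x summable_on UNIV"
    using assms by (auto simp: weighted_graph_def)
  obtain v where v_pos: "\<And>x. 0 < v x" and v_deg: "(\<lambda>x. v x * infsum (b x) UNIV) summable_on UNIV"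
    using ex_pos_summable_on_times[of "\<lambda>x. infsum (b x) UNIV"] b_nonneg
    by (metis infsum_nonneg)
  have rows: "((\<lambda>y. (sqrt (v x))\<^sup>2 * b x y) has_sum (v x * infsum (b x) UNIV)) UNIV" for x
    using has_sum_cmult_right[OF has_sum_infsum[OF b_rows]] v_pos[of x]
    by (simp add: less_imp_le)
  have "(\<lambda>(x, y). (sqrt (v x))\<^sup>2 * b x y) summable_on Sigma UNIV (\<lambda>_. UNIV)"
    by (rule summable_on_SigmaI[OF _ v_deg]) (use rows b_nonneg in auto)
  then show ?thesis
    using that[of "\<lambda>x. sqrt (v x)"] v_pos by simp
qed

lemma summable_energy_norm_diff_plus_weights:
  fixes b :: "'a \<Rightarrow> 'a \<Rightarrow> real" and f :: "'a \<Rightarrow> complex"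
  assumes "weighted_graph b" and "finite_energy b f"
    and "(\<lambda>(x, y). (w x)\<^sup>2 * b x y) summable_on UNIV"
  shows "(\<lambda>(x, y). b x y * (cmod (f x - f y) + (if x = y then 0 else w x + w y))\<^sup>2) summable_on UNIV"
proof (rule summable_on_comparison_test)
  have b_nonneg: "\<And>x y. 0 \<le> b x y" and b_sym: "\<And>x y. b x y = b y x"
    using assms(1) by (auto simp: weighted_graph_def)
  define V where "V x y = b x y * (cmod (f x - f y))\<^sup>2 + 4 * ((w x)\<^sup>2 * b x y)" for x y
  have "(\<lambda>(x, y). V x y) summable_on UNIV"
    using summable_on_add[OF assms(2)[unfolded finite_energy_def] summable_on_cmult_right[OF assms(3), of 4]]
    by (simp add: V_def case_prod_unfold)
  then show "(\<lambda>(x, y). V x y + V y x) summable_on UNIV"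
    by (rule summable_on_plus_swap)
  fix z :: "'a \<times> 'a"
  obtain x y where z: "z = (x, y)"
    by fastforce
  let ?a = "cmod (f x - f y)" and ?r = "if x = y then 0 else w x + w y"
  have "?r\<^sup>2 \<le> 2 * ((w x)\<^sup>2 + (w y)\<^sup>2)"
    using power2_sum_le[of "w x" "w y"] by simp
  then have "(?a + ?r)\<^sup>2 \<le> 2 * ?a\<^sup>2 + 4 * (w x)\<^sup>2 + 4 * (w y)\<^sup>2"
    using power2_sum_le[of ?a ?r] by simp
  then have "b x y * (?a + ?r)\<^sup>2 \<le> b x y * (2 * ?a\<^sup>2 + 4 * (w x)\<^sup>2 + 4 * (w y)\<^sup>2)"
    by (rule mult_left_mono) (rule b_nonneg)
  then show "(\<lambda>(x, y). b x y * (cmod (f x - f y) + (if x = y then 0 else w x + w y))\<^sup>2) z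
      \<le> (\<lambda>(x, y). V x y + V y x) z"
    by (simp add: z V_def b_sym[of y x] norm_minus_commute algebra_simps)
  show "0 \<le> (\<lambda>(x, y). b x y * (cmod (f x - f y) + (if x = y then 0 else w x + w y))\<^sup>2) z"
    by (simp add: z b_nonneg)
qed

lemma bounded_if_intrinsic_mtotally_bounded:
  fixes b :: "'a::countable \<Rightarrow> 'a \<Rightarrow> real" and f :: "'a \<Rightarrow> complex"
  assumes wg: "weighted_graph b" and fe: "finite_energy b f"
    and tb: "\<And>m \<sigma>. \<forall>x. 0 \<le> m x \<Longrightarrow> m summable_on UNIV \<Longrightarrow> Metric_space UNIV \<sigma> \<Longrightarrow>
               intrinsic b m \<sigma> \<Longrightarrow> Metric_space.mtotally_bounded UNIV \<sigma> UNIV"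
  shows "\<exists>C. \<forall>x. cmod (f x) \<le> C"
proof -
  obtain w where w_pos: "\<And>x. 0 < w x" and w_energy: "(\<lambda>(x, y). (w x)\<^sup>2 * b x y) summable_on UNIV"
    using ex_pos_weight_summable_edge_energy[OF wg] by blast
  define d where "d x y = cmod (f x - f y) + (if x = y then 0 else w x + w y)" for x y
  have d_metric: "Metric_space UNIV d"
    unfolding d_def using w_pos by (rule Metric_space_norm_diff_plus_weights)
  have d_energy: "(\<lambda>(x, y). b x y * (d x y)\<^sup>2) summable_on UNIV"
    unfolding d_def using wg fe w_energy by (rule summable_energy_norm_diff_plus_weights)
  define m where "m x = (1/2) * (\<Sum>\<^sub>\<infinity>y. b x y * (d x y)\<^sup>2)" for x
  have "Metric_space.mtotally_bounded UNIV d UNIV"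
  proof (rule tb)
    show "\<forall>x. 0 \<le> m x"
      using wg by (simp add: m_def weighted_graph_def infsum_nonneg)
  qed (use intrinsic_of_summable_energy[OF d_energy] d_metric in \<open>simp_all add: m_def[abs_def]\<close>)
  moreover have "cmod (f x - f y) \<le> d x y" for x y
    using w_pos[of x] w_pos[of y] by (simp add: d_def)
  ultimately show ?thesis
    using Metric_space.bounded_if_mtotally_bounded_Lipschitz[OF d_metric, of f] by auto
qed

lemma sqrt_four_pow_weight_grows:
  fixes N :: "'a \<Rightarrow> nat" and \<sigma> :: "'a \<Rightarrow> 'a \<Rightarrow> real"
  assumes "\<And>k. finite {x. N x \<le> k}" and "\<And>u v. 0 \<le> \<sigma> u v"
  shows "\<exists>T. finite T \<and> (\<forall>u v. v \<notin> T \<longrightarrow> a * \<sigma> u v \<le> \<sigma> u v * sqrt (4 ^ N u + 4 ^ N v))"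
proof -
  obtain K :: nat where "a \<le> 2 ^ K"
    using real_arch_pow[of 2 a] by (auto intro: less_imp_le)
  have "a * \<sigma> u v \<le> \<sigma> u v * sqrt (4 ^ N u + 4 ^ N v)" if "K < N v" for u v
  proof -
    have "(2 ^ K)\<^sup>2 = (4 :: real) ^ K"
      by (simp add: power2_eq_square flip: power_mult_distrib)
    also have "\<dots> \<le> 4 ^ N v"
      using that by (intro power_increasing) auto
    finally have "2 ^ K \<le> sqrt (4 ^ N u + 4 ^ N v)"
      by (intro real_le_rsqrt) (simp add: add_increasing)
    with \<open>a \<le> 2 ^ K\<close> show ?thesis
      using assms(2)[of u v] by (metis mult.commute mult_left_mono order_trans)
  qed
  then show ?thesis
    using assms(1)[of K] by (intro exI[of _ "{x. N x \<le> K}"]) auto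
qed

lemma mtotally_bounded_if_finite_energy_bounded:
  fixes b :: "'a::countable \<Rightarrow> 'a \<Rightarrow> real" and \<sigma> :: "'a \<Rightarrow> 'a \<Rightarrow> real"
  assumes wg: "weighted_graph b" and connected: "\<And>x y. \<exists>p. is_path b p \<and> hd p = x \<and> last p = y"
    and bounded: "\<And>f :: 'a \<Rightarrow> complex. finite_energy b f \<Longrightarrow> \<exists>C. \<forall>x. cmod (f x) \<le> C"
    and "\<forall>x. 0 \<le> m x" and "m summable_on UNIV" and \<sigma>_metric: "Metric_space UNIV \<sigma>"
    and "intrinsic b m \<sigma>"
  shows "Metric_space.mtotally_bounded UNIV \<sigma> UNIV"
proof (rule ccontr)
  assume not_tb: "\<not> Metric_space.mtotally_bounded UNIV \<sigma> UNIV"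
  fix r :: 'a
  have \<sigma>_nonneg: "\<And>u v. 0 \<le> \<sigma> u v" and \<sigma>_sym: "\<And>u v. \<sigma> u v = \<sigma> v u"
    using Metric_space.nonneg[OF \<sigma>_metric] Metric_space.commute[OF \<sigma>_metric] by auto
  obtain N :: "'a \<Rightarrow> nat" where N_fin: "\<And>k. finite {x. N x \<le> k}"
    and N_sum: "(\<lambda>x. 4 ^ N x * m x) summable_on UNIV"
    using ex_proper_weight_summable assms(4,5) by blast
  define c where "c x y = \<sigma> x y * sqrt (4 ^ N x + 4 ^ N y)" for x y
  have c_nonneg: "0 \<le> c u v" and c_sym: "c u v = c v u" for u v
    using \<sigma>_nonneg \<sigma>_sym by (simp_all add: c_def add.commute)
  have "(\<lambda>(x, y). b x y * (\<sigma> x y)\<^sup>2 * (4 ^ N x + 4 ^ N y)) summable_on UNIV"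
    using N_sum \<sigma>_sym by (intro summable_weighted_intrinsic_energy[OF wg _ assms(7)]) auto
  then have "(\<lambda>(x, y). b x y * (c x y)\<^sup>2) summable_on UNIV"
    by (simp add: c_def power_mult_distrib mult.assoc)
  then obtain C where "\<And>x. cmod (complex_of_real (path_dist b c r x)) \<le> C"
    using bounded finite_energy_path_dist[where c = c, OF wg c_nonneg c_sym connected[of r]] by blast
  moreover have "\<exists>x. C < path_dist b c r x"
    using sqrt_four_pow_weight_grows[OF N_fin \<sigma>_nonneg] unfolding c_def[abs_def]
    by (rule path_dist_unbounded[OF \<sigma>_metric not_tb connected[of r] c_nonneg[unfolded c_def]])
  ultimately show False
    by (metis norm_of_real abs_ge_self not_le order_trans)
qed

theorem mainTheorem19:
  fixes b :: "'a::countable \<Rightarrow> 'a \<Rightarrow> real"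
  assumes "infinite (UNIV :: 'a set)"
    and "weighted_graph b"
    and "is_tree b"
  shows "(\<forall>(m :: 'a \<Rightarrow> real) (\<sigma> :: 'a \<Rightarrow> 'a \<Rightarrow> real).
             (\<forall>x. 0 \<le> m x) \<longrightarrow> m summable_on UNIV \<longrightarrow>
             Metric_space UNIV \<sigma> \<longrightarrow> intrinsic b m \<sigma> \<longrightarrow>
             Metric_space.mtotally_bounded UNIV \<sigma> UNIV)
         \<longleftrightarrow> (\<forall>f :: 'a \<Rightarrow> complex. finite_energy b f \<longrightarrow> (\<exists>C. \<forall>x. cmod (f x) \<le> C))"
  using bounded_if_intrinsic_mtotally_bounded[OF assms(2)]
    mtotally_bounded_if_finite_energy_bounded[OF assms(2) is_tree_ex_path[OF assms(3)]]
  by blast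

end
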